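(* Let $G$ be a finite graph with $n$ vertices, each of degree at least $1$. Take $r=2$, $V=\mathbb{C}^2$, $B=I_2$, and the tensors $A_1^1=0$, $A_1^2=t$, and for $d\ge 2$: $A_d^{i_1\dots i_d}=x_1$ if $(i_1,\dots,i_d)$ is a permutation of $(1,1,2,\dots,2)$, $=t$ if $(i_1,\dots,i_d)=(2,\dots,2)$, and $0$ otherwise, with $x_1=1$ and $t=0$. Then $\mathcal{F}_{\mathcal{A},I_2}(G)$ equals the number of spanning cycles of $G$, i.e. of $2$-valent subgraphs of $G$ with $n$ edges.
   Context: $\mathcal{F}_{\mathcal{A},B}(G)=\sum_{c:H\to\{1,\dots,r\}}\prod_{\{h,h'\}\in E(G)}B_{c(h)c(h')}\prod_{k}A_{d_k}^{c(h_{k,1})\dots c(h_{k,d_k})}$, where $H$ is the set of half-edges of $G$ (two per edge, loops included) and $h_{k,1},\dots,h_{k,d_k}$ are the half-edges at vertex $v_k$ of degree $d_k$; i.e. a copy of $A_{d_k}$ is placed at each vertex and contracted along edges using $B$. A cycle of $G$ is a $2$-valent subgraph (every vertex in it has degree $2$ within it, loops counted twice), not necessarily connected; a spanning cycle is one with $n=|V(G)|$ edges. *)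

theory Defs
  imports Complex_Main "HOL-Library.FuncSet" "HOL-Library.Product_Lexorder" "HOL-Library.Multiset"
begin

text \<open>A finite multigraph (loops and parallel edges allowed) with vertex set V,
edge set E and an endpoint map: edge e joins fst (ends e) and snd (ends e).
Half-edges are pairs (e, b), b :: bool; (e, False) sits at fst (ends e),
(e, True) sits at snd (ends e). A loop thus contributes two half-edges.\<close>

definition multigraph :: "'v set \<Rightarrow> 'e set \<Rightarrow> ('e \<Rightarrow> 'v \<times> 'v) \<Rightarrow> bool" where
  "multigraph V E ends \<longleftrightarrow> finite V \<and> finite E \<and>
     (\<forall>e\<in>E. fst (ends e) \<in> V \<and> snd (ends e) \<in> V)"

definition half_edges :: "'e set \<Rightarrow> ('e \<times> bool) set" where
  "half_edges E = E \<times> UNIV"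

definition hvertex :: "('e \<Rightarrow> 'v \<times> 'v) \<Rightarrow> 'e \<times> bool \<Rightarrow> 'v" where
  "hvertex ends h = (if snd h then snd (ends (fst h)) else fst (ends (fst h)))"

definition half_edges_at :: "'e set \<Rightarrow> ('e \<Rightarrow> 'v \<times> 'v) \<Rightarrow> 'v \<Rightarrow> ('e \<times> bool) set" where
  "half_edges_at S ends v = {h \<in> half_edges S. hvertex ends h = v}"

text \<open>Degree of v within the edge set S (loops counted twice).\<close>
definition degree_in :: "'e set \<Rightarrow> ('e \<Rightarrow> 'v \<times> 'v) \<Rightarrow> 'v \<Rightarrow> nat" where
  "degree_in S ends v = card (half_edges_at S ends v)"

text \<open>The partition function F_{A,B}(G): colours are 1..r; A d is the tensor placed
at a vertex of degree d, read on the list of colours of the half-edges at the vertex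
(listed in increasing order of half-edges); B is contracted along each edge.\<close>
definition partition_fun ::
  "nat \<Rightarrow> (nat \<Rightarrow> nat list \<Rightarrow> complex) \<Rightarrow> (nat \<Rightarrow> nat \<Rightarrow> complex) \<Rightarrow>
   'v set \<Rightarrow> 'e::linorder set \<Rightarrow> ('e \<Rightarrow> 'v \<times> 'v) \<Rightarrow> complex" where
  "partition_fun r A B V E ends =
     (\<Sum>c \<in> half_edges E \<rightarrow>\<^sub>E {1..r}.
        (\<Prod>e\<in>E. B (c (e, False)) (c (e, True))) *
        (\<Prod>v\<in>V. A (degree_in E ends v)
                   (map c (sorted_list_of_set (half_edges_at E ends v)))))"

definition A_cor :: "complex \<Rightarrow> complex \<Rightarrow> nat \<Rightarrow> nat list \<Rightarrow> complex" where
  "A_cor x1 t d is =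
     (if d = 1 then (if is = [1] then 0 else if is = [2] then t else 0)
      else if 2 \<le> d \<and> length is = d \<and> mset is = mset (1 # 1 # replicate (d - 2) 2) then x1
      else if 2 \<le> d \<and> is = replicate d 2 then t
      else 0)"

definition B_id :: "nat \<Rightarrow> nat \<Rightarrow> complex" where
  "B_id i j = (if i = j then 1 else 0)"

text \<open>Spanning cycles: 2-valent subgraphs (given by their edge set; every vertex of the
subgraph has degree 2 in it, i.e. every vertex of G has degree 0 or 2 in it) with n = |V| edges.\<close>
definition spanning_cycles :: "'v set \<Rightarrow> 'e set \<Rightarrow> ('e \<Rightarrow> 'v \<times> 'v) \<Rightarrow> 'e set set" where
  "spanning_cycles V E ends =
     {S. S \<subseteq> E \<and> (\<forall>v\<in>V. degree_in S ends v = 0 \<or> degree_in S ends v = 2)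
         \<and> card S = card V}"

end

theory Submission
  imports Defs
begin

text \<open>Since \<open>B = I\<^sub>2\<close>, only colourings that are constant on every edge contribute, and
these correspond to the sets \<open>S\<close> of edges coloured \<open>1\<close>. With \<open>x\<^sub>1 = 1\<close> and \<open>t = 0\<close>
the tensor at a vertex is \<open>1\<close> exactly when two of its half-edges have colour \<open>1\<close>, so
\<open>F(G)\<close> counts the edge sets \<open>S\<close> in which every vertex has degree \<open>2\<close>. By the
handshake lemma these are exactly the spanning cycles: \<open>S\<close> is \<open>2\<close>-regular on \<open>V\<close> iff
all degrees are \<open>0\<close> or \<open>2\<close> and \<open>2 |S| = 2 |V|\<close>.\<close>

lemma prod_of_bool_eq:
  "finite A \<Longrightarrow> (\<Prod>x\<in>A. of_bool (P x) :: 'a::comm_semiring_1) = of_bool (\<forall>x\<in>A. P x)"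
  by (induction A rule: finite_induct) auto

lemma count_mset_map_sorted_list_of_set:
  "finite H \<Longrightarrow> count (mset (map c (sorted_list_of_set H))) a = card {h\<in>H. c h = a}"
proof -
  assume "finite H"
  have "count (mset (map c (sorted_list_of_set H))) a
      = length (filter (\<lambda>h. a = c h) (sorted_list_of_set H))"
    unfolding count_mset count_list_eq_length_filter filter_map length_map o_def ..
  also have "\<dots> = card {h\<in>H. c h = a}"
    using \<open>finite H\<close> by (simp add: distinct_length_filter Int_def conj_commute eq_commute)
  finally show ?thesis .
qed

lemma count_one_add_count_two:
  "set xs \<subseteq> {1, 2::nat} \<Longrightarrow> count (mset xs) 1 + count (mset xs) 2 = length xs"
  by (induction xs) auto

lemma mset_eq_two_ones_iff:
  assumes "set xs \<subseteq> {1, 2::nat}"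
  shows "mset xs = mset (1 # 1 # replicate (length xs - 2) 2) \<longleftrightarrow> count (mset xs) 1 = 2"
proof
  assume "count (mset xs) 1 = 2"
  moreover from this have "count (mset xs) 2 = length xs - 2"
    using count_one_add_count_two[OF assms] by simp
  moreover have "count (mset xs) x = 0" if "x \<noteq> 1" "x \<noteq> 2" for x
    using assms that by (auto simp: count_mset_0_iff)
  ultimately show "mset xs = mset (1 # 1 # replicate (length xs - 2) 2)"
    by (intro multiset_eqI) auto
qed simp

text \<open>This also holds for \<open>xs = []\<close>, where \<open>A_cor\<close> is \<open>0\<close>.\<close>
lemma A_cor_1_0_eq:
  assumes "set xs \<subseteq> {1, 2::nat}"
  shows "A_cor 1 0 (length xs) xs = of_bool (count (mset xs) 1 = 2)"
proof (cases "length xs = 1")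
  case True
  then obtain a where "xs = [a]" by (cases xs) auto
  then show ?thesis using assms by (auto simp: A_cor_def)
next
  case False
  have "count (mset xs) 1 \<le> length xs"
    using count_one_add_count_two[OF assms] by simp
  with False show ?thesis using mset_eq_two_ones_iff[OF assms] by (auto simp: A_cor_def)
qed

definition lift_colouring :: "'e set \<Rightarrow> ('e \<Rightarrow> nat) \<Rightarrow> 'e \<times> bool \<Rightarrow> nat" where
  "lift_colouring E k = (\<lambda>h\<in>half_edges E. k (fst h))"

lemma inj_on_lift_colouring: "inj_on (lift_colouring E) (E \<rightarrow>\<^sub>E C)"
proof
  fix k k' assume k: "k \<in> E \<rightarrow>\<^sub>E C" "k' \<in> E \<rightarrow>\<^sub>E C"
    and eq: "lift_colouring E k = lift_colouring E k'"
  show "k = k'"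
  proof (rule PiE_ext[OF k])
    fix e assume "e \<in> E"
    then show "k e = k' e"
      using fun_cong[OF eq, of "(e, False)"] by (simp add: lift_colouring_def half_edges_def)
  qed
qed

lemma edge_constant_colouring_in_image:
  assumes "c \<in> half_edges E \<rightarrow>\<^sub>E C" and "\<forall>e\<in>E. c (e, False) = c (e, True)"
  shows "c \<in> lift_colouring E ` (E \<rightarrow>\<^sub>E C)"
proof
  show "(\<lambda>e\<in>E. c (e, False)) \<in> E \<rightarrow>\<^sub>E C"
    using assms(1) by (auto simp: half_edges_def)
  show "c = lift_colouring E (\<lambda>e\<in>E. c (e, False))"
  proof
    fix h :: "'a \<times> bool"
    obtain e b where h: "h = (e, b)" by (cases h)
    show "c h = lift_colouring E (\<lambda>e\<in>E. c (e, False)) h"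
      using assms by (cases b) (auto simp: h lift_colouring_def half_edges_def PiE_def extensional_def)
  qed
qed

lemma sum_half_edge_colourings_B_id:
  assumes "finite E" and "finite C"
  shows "(\<Sum>c\<in>half_edges E \<rightarrow>\<^sub>E C. (\<Prod>e\<in>E. B_id (c (e, False)) (c (e, True))) * f c)
       = (\<Sum>k\<in>E \<rightarrow>\<^sub>E C. f (lift_colouring E k))"
proof -
  have finite_colourings: "finite (half_edges E \<rightarrow>\<^sub>E C)"
    using assms by (intro finite_PiE) (auto simp: half_edges_def)
  have lift_into: "lift_colouring E ` (E \<rightarrow>\<^sub>E C) \<subseteq> half_edges E \<rightarrow>\<^sub>E C"
    by (auto simp: lift_colouring_def half_edges_def)
  have B_id_lift: "(\<Prod>e\<in>E. B_id (lift_colouring E k (e, False)) (lift_colouring E k (e, True))) = 1"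
    for k by (intro prod.neutral) (simp add: B_id_def lift_colouring_def half_edges_def)
  have B_id_vanishes: "(\<Prod>e\<in>E. B_id (c (e, False)) (c (e, True))) = 0"
    if "c \<in> (half_edges E \<rightarrow>\<^sub>E C) - lift_colouring E ` (E \<rightarrow>\<^sub>E C)" for c
    using that edge_constant_colouring_in_image[of c E C] assms
    by (auto intro!: prod_zero simp: B_id_def)
  have "(\<Sum>c\<in>half_edges E \<rightarrow>\<^sub>E C. (\<Prod>e\<in>E. B_id (c (e, False)) (c (e, True))) * f c)
      = (\<Sum>c\<in>lift_colouring E ` (E \<rightarrow>\<^sub>E C). (\<Prod>e\<in>E. B_id (c (e, False)) (c (e, True))) * f c)"
    by (rule sum.mono_neutral_right[OF finite_colourings lift_into]) (simp add: B_id_vanishes)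
  also have "\<dots> = (\<Sum>k\<in>E \<rightarrow>\<^sub>E C. f (lift_colouring E k))"
    by (simp add: sum.reindex[OF inj_on_lift_colouring] B_id_lift)
  finally show ?thesis .
qed

definition colouring_of :: "'e set \<Rightarrow> 'e set \<Rightarrow> 'e \<Rightarrow> nat" where
  "colouring_of E S = (\<lambda>e\<in>E. if e \<in> S then 1 else 2)"

lemma bij_betw_colouring_of: "bij_betw (colouring_of E) (Pow E) (E \<rightarrow>\<^sub>E {1..2})"
proof (rule bij_betw_byWitness[where f' = "\<lambda>k. {e\<in>E. k e = 1}"])
  show "\<forall>k\<in>E \<rightarrow>\<^sub>E {1..2}. colouring_of E {e\<in>E. k e = 1} = k"
    by (fastforce simp: colouring_of_def PiE_def Pi_iff extensional_def)
qed (auto simp: colouring_of_def)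

lemma count_colour_one_at:
  assumes "finite E" and "S \<subseteq> E"
  shows "count (mset (map (lift_colouring E (colouring_of E S))
            (sorted_list_of_set (half_edges_at E ends v)))) 1 = degree_in S ends v"
proof -
  have "{h \<in> half_edges_at E ends v. lift_colouring E (colouring_of E S) h = 1}
      = half_edges_at S ends v"
    using assms(2) by (auto simp: half_edges_at_def half_edges_def lift_colouring_def colouring_of_def)
  moreover have "finite (half_edges_at E ends v)"
    using assms(1) by (simp add: half_edges_at_def half_edges_def)
  ultimately show ?thesis by (simp only: count_mset_map_sorted_list_of_set degree_in_def)
qed

lemma A_cor_at_colouring_of:
  assumes "finite E" and "S \<subseteq> E"
  shows "A_cor 1 0 (degree_in E ends v)
      (map (lift_colouring E (colouring_of E S)) (sorted_list_of_set (half_edges_at E ends v)))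
    = of_bool (degree_in S ends v = 2)"
proof -
  let ?xs = "map (lift_colouring E (colouring_of E S)) (sorted_list_of_set (half_edges_at E ends v))"
  have "finite (half_edges_at E ends v)"
    using assms(1) by (simp add: half_edges_at_def half_edges_def)
  then have "length ?xs = degree_in E ends v" "set ?xs \<subseteq> {1, 2}"
    by (auto simp: degree_in_def lift_colouring_def colouring_of_def half_edges_at_def half_edges_def)
  then show ?thesis
    using A_cor_1_0_eq[of ?xs] count_colour_one_at[OF assms, of ends v] by metis
qed

lemma handshake:
  assumes "multigraph V E ends" and "S \<subseteq> E"
  shows "(\<Sum>v\<in>V. degree_in S ends v) = 2 * card S"
proof -
  have "finite V" "finite S"
    using assms finite_subset unfolding multigraph_def by auto
  have "half_edges S = (\<Union>v\<in>V. half_edges_at S ends v)"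
    using assms unfolding multigraph_def half_edges_at_def half_edges_def hvertex_def
    by (auto; metis subsetD)
  then have "card (half_edges S) = (\<Sum>v\<in>V. card (half_edges_at S ends v))"
    using \<open>finite V\<close> \<open>finite S\<close>
    by (simp only:) (rule card_UN_disjoint; auto simp: half_edges_at_def half_edges_def)
  then show ?thesis
    using \<open>finite S\<close> by (simp add: degree_in_def half_edges_def card_cartesian_product)
qed

lemma spanning_cycles_eq_two_regular:
  assumes "multigraph V E ends"
  shows "spanning_cycles V E ends = {S\<in>Pow E. \<forall>v\<in>V. degree_in S ends v = 2}"
proof (intro set_eqI iffI)
  fix S assume "S \<in> {S\<in>Pow E. \<forall>v\<in>V. degree_in S ends v = 2}"
  then show "S \<in> spanning_cycles V E ends"
    using handshake[OF assms, of S] by (simp add: spanning_cycles_def)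
next
  fix S assume "S \<in> spanning_cycles V E ends"
  then have S: "S \<subseteq> E" "\<forall>v\<in>V. degree_in S ends v \<le> 2" "card S = card V"
    by (auto simp: spanning_cycles_def)
  have "finite V" using assms by (simp add: multigraph_def)
  have "(\<Sum>v\<in>V. 2 - degree_in S ends v) = (\<Sum>v\<in>V. 2) - (\<Sum>v\<in>V. degree_in S ends v)"
    using S(2) by (intro sum_subtractf_nat) auto
  also have "\<dots> = 0" using handshake[OF assms S(1)] S(3) by simp
  finally have "\<forall>v\<in>V. degree_in S ends v = 2"
    using \<open>finite V\<close> S(2) by (metis diff_is_0_eq le_antisym sum_eq_0_iff)
  with S(1) show "S \<in> {S\<in>Pow E. \<forall>v\<in>V. degree_in S ends v = 2}" by simp
qed

theorem corollary2:
  fixes V :: "'v set" and E :: "'e::linorder set" and ends :: "'e \<Rightarrow> 'v \<times> 'v"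
  assumes "multigraph V E ends"
    and "\<forall>v\<in>V. degree_in E ends v \<ge> 1"
  shows "partition_fun 2 (A_cor 1 0) B_id V E ends = of_nat (card (spanning_cycles V E ends))"
proof -
  have "finite V" "finite E" using assms(1) by (auto simp: multigraph_def)
  let ?colours_at = "\<lambda>c v. map c (sorted_list_of_set (half_edges_at E ends v))"
  have "partition_fun 2 (A_cor 1 0) B_id V E ends
      = (\<Sum>k\<in>E \<rightarrow>\<^sub>E {1..2}. \<Prod>v\<in>V. A_cor 1 0 (degree_in E ends v) (?colours_at (lift_colouring E k) v))"
    by (simp add: partition_fun_def sum_half_edge_colourings_B_id[OF \<open>finite E\<close> finite_atLeastAtMost])
  also have "\<dots> = (\<Sum>S\<in>Pow E. \<Prod>v\<in>V.
      A_cor 1 0 (degree_in E ends v) (?colours_at (lift_colouring E (colouring_of E S)) v))"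
    by (rule sum.reindex_bij_betw[OF bij_betw_colouring_of, symmetric])
  also have "\<dots> = (\<Sum>S\<in>Pow E. \<Prod>v\<in>V. of_bool (degree_in S ends v = 2))"
    by (rule sum.cong[OF refl], rule prod.cong[OF refl]) (simp add: A_cor_at_colouring_of \<open>finite E\<close>)
  also have "\<dots> = of_nat (card (Pow E \<inter> {S. \<forall>v\<in>V. degree_in S ends v = 2}))"
    using \<open>finite E\<close> by (simp add: prod_of_bool_eq[OF \<open>finite V\<close>] sum_of_bool_eq)
  also have "\<dots> = of_nat (card (spanning_cycles V E ends))"
    by (simp add: spanning_cycles_eq_two_regular[OF assms(1)] Int_def)
  finally show ?thesis .
qed

end
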